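(* The online correlated rental algorithm described in the context (Algorithm 1) is a $\frac{1}{32}$-OCR algorithm. That is, for every integer $d\ge1$, every fixed sequence of proposals $Q_1,\dots,Q_n$, every round $j$ and every offline vertex $i$, with $j'=\mathrm{prev}^i_j$, $$\Delta\mu^i_j \ge \begin{cases} 0 & i\notin Q_j,\\ p^i_j & i\in Q_j,\ |Q_j|=1,\\ p^i_j/2 & i\in Q_j,\ |Q_j|=2,\ j'\le j-d,\\ p^i_j/2+\frac{1}{32}\,(p^i_{j'}-\Delta\mu^i_{j'}) & i\in Q_j,\ |Q_j|=2,\ j'>j-d.\end{cases}$$ In particular, a $\frac{1}{32}$-OCR online algorithm exists.
   Context: Online correlated rental setting: there is a finite set $V$ of offline vertices and an integer $d\ge1$. A sequence $Q_1,\dots,Q_n$ of subsets of $V$, each of size $1$ or $2$, is fixed in advance and revealed online; at round $j$ the algorithm receives $Q_j$ and must select one vertex of $Q_j$. Round $j$ is deterministic if $|Q_j|=1$ and randomized if $|Q_j|=2$. An offline vertex $i$ is matched at round $j$ if it is selected at round $j$ and it was not matched at any round $t$ with $j-d<t<j$ (matching is built greedily in increasing time). Define $\Delta\mu^i_j=\Pr[i \text{ is matched at round } j]$ and $p^i_j=1-\sum_{t=\max\{1,j-d+1\}}^{j-1}\Delta\mu^i_t$ (the probability that $i$ is available at round $j$). $\mathrm{prev}^i_j$ is the largest $j'<j$ with $i\in Q_{j'}$, and $-\infty$ if none exists. An algorithm is $\gamma$-OCR ($0\le\gamma\le1$) if the displayed inequalities hold with $\frac1{32}$ replaced by $\gamma$.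 Algorithm 1: it keeps a state $\tau_{i,t}\in\{\mathrm{sel},\mathrm{nsel},\mathrm{unk}\}$ for every $i\in V$ and every round $t$, initially all $\mathrm{unk}$. All random draws are fresh and independent. "Reset $i$" at round $j$ means setting $\tau_{i,t}=\mathrm{unk}$ for all $t\in[j+1,j+d-1]$. (1) If $Q_j=\{i_1\}$: reset $i_1$ and select $i_1$. (2) If $Q_j=\{i_1,i_2\}$: with probability $1/2$ the round is a sender, and otherwise it is a receiver. - Sender: draw $\ell,m\in\{1,2\}$ independently and uniformly. Reset $i_{3-m}$. Set $\tau_{i_m,t}=\mathrm{sel}$ for all $t\in[j+1,j+d-1]$ if $\ell=m$, and $\tau_{i_m,t}=\mathrm{nsel}$ for those $t$ otherwise. Select $i_\ell$. - Receiver: draw $m\in\{1,2\}$ uniformly. If $\tau_{i_m,j}=\mathrm{sel}$, let $\ell=3-m$; if $\tau_{i_m,j}=\mathrm{nsel}$, let $\ell=m$; otherwise draw $\ell\in\{1,2\}$ uniformly. Reset $i_1$ and $i_2$. Select $i_\ell$. *)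

theory Defs
  imports "HOL-Probability.Probability"
begin

text \<open>Rounds are numbered 1..n; round j's proposal is Q ! (j-1).
  The state of Algorithm 1 is the tau table together with the list of
  vertices selected so far (selection at round j is entry j-1).\<close>

datatype tstate = Sel | NSel | Unk

type_synonym 'v ocr_state = "('v \<Rightarrow> nat \<Rightarrow> tstate) \<times> 'v list"

definition set_tau :: "nat \<Rightarrow> 'v \<Rightarrow> nat \<Rightarrow> tstate \<Rightarrow> ('v \<Rightarrow> nat \<Rightarrow> tstate) \<Rightarrow> ('v \<Rightarrow> nat \<Rightarrow> tstate)" where
  "set_tau d i j x tau = tau(i := (\<lambda>t. if j + 1 \<le> t \<and> t + 1 \<le> j + d then x else tau i t))"

definition reset :: "nat \<Rightarrow> 'v \<Rightarrow> nat \<Rightarrow> ('v \<Rightarrow> nat \<Rightarrow> tstate) \<Rightarrow> ('v \<Rightarrow> nat \<Rightarrow> tstate)" where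
  "reset d i j tau = set_tau d i j Unk tau"

text \<open>A fixed (arbitrary) labelling i1, i2 of a proposal set.\<close>
definition fst_el :: "'v set \<Rightarrow> 'v" where "fst_el Q = (SOME x. x \<in> Q)"
definition snd_el :: "'v set \<Rightarrow> 'v" where "snd_el Q = (SOME y. y \<in> Q - {fst_el Q})"

text \<open>One round j of Algorithm 1 (coin = True encodes index 1, False index 2).\<close>
definition alg_step :: "nat \<Rightarrow> 'v set \<Rightarrow> nat \<Rightarrow> 'v ocr_state \<Rightarrow> 'v ocr_state pmf" where
  "alg_step d Q j st =
    (let tau = fst st; sels = snd st; i1 = fst_el Q; i2 = snd_el Q;
         pick = (\<lambda>b. if b then i1 else i2) in
     if card Q = 1 then return_pmf (reset d i1 j tau, sels @ [i1])
     else do {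
       sender \<leftarrow> bernoulli_pmf (1/2);
       if sender then do {
         l \<leftarrow> bernoulli_pmf (1/2);
         m \<leftarrow> bernoulli_pmf (1/2);
         let tau' = set_tau d (pick m) j (if l = m then Sel else NSel) (reset d (pick (\<not> m)) j tau);
         return_pmf (tau', sels @ [pick l])
       } else do {
         m \<leftarrow> bernoulli_pmf (1/2);
         l \<leftarrow> (case tau (pick m) j of
                  Sel \<Rightarrow> return_pmf (\<not> m)
                | NSel \<Rightarrow> return_pmf m
                | Unk \<Rightarrow> bernoulli_pmf (1/2));
         return_pmf (reset d i2 j (reset d i1 j tau), sels @ [pick l])
       }
     })"

fun alg_run :: "nat \<Rightarrow> 'v set list \<Rightarrow> nat \<Rightarrow> 'v ocr_state pmf" where
  "alg_run d Q 0 = return_pmf (\<lambda>_ _. Unk, [])"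
| "alg_run d Q (Suc k) = alg_run d Q k \<bind> alg_step d (Q ! k) (Suc k)"

text \<open>Rounds (up to j) at which i is matched, given the selection list s
  (greedy in increasing time).\<close>
fun matched_rounds :: "nat \<Rightarrow> 'v list \<Rightarrow> 'v \<Rightarrow> nat \<Rightarrow> nat set" where
  "matched_rounds d s i 0 = {}"
| "matched_rounds d s i (Suc j) = matched_rounds d s i j \<union>
     (if Suc j \<le> length s \<and> s ! j = i \<and>
         (\<forall>t\<in>matched_rounds d s i j. \<not> (Suc j - d < t))
      then {Suc j} else {})"

definition matched :: "nat \<Rightarrow> 'v list \<Rightarrow> 'v \<Rightarrow> nat \<Rightarrow> bool" where
  "matched d s i j \<longleftrightarrow> j \<in> matched_rounds d s i j"

definition dmu :: "nat \<Rightarrow> 'v set list \<Rightarrow> 'v \<Rightarrow> nat \<Rightarrow> real" where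
  "dmu d Q i j = measure_pmf.prob (alg_run d Q (length Q)) {st. matched d (snd st) i j}"

definition avail :: "nat \<Rightarrow> 'v set list \<Rightarrow> 'v \<Rightarrow> nat \<Rightarrow> real" where
  "avail d Q i j = 1 - (\<Sum>t\<in>{max 1 (j + 1 - d)..<j}. dmu d Q i t)"

text \<open>prev^i_j: largest j' < j (j' \<ge> 1) with i \<in> Q_j'; None encodes -\<infinity>.\<close>
definition prev :: "'v set list \<Rightarrow> 'v \<Rightarrow> nat \<Rightarrow> nat option" where
  "prev Q i j = (if \<exists>j'. 1 \<le> j' \<and> j' < j \<and> i \<in> Q ! (j' - 1)
                 then Some (GREATEST j'. 1 \<le> j' \<and> j' < j \<and> i \<in> Q ! (j' - 1)) else None)"

end

theory Submission
  imports Defs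
begin

text \<open>All randomness of Algorithm 1 can be drawn in advance as one uniformly random
  eight-valued coin per round, so \<open>\<Delta>\<mu>\<^sup>i\<^sub>j\<close> and \<open>p\<^sup>i\<^sub>j\<close> become counts of coin lists.
  At a randomized round \<open>j\<close> with \<open>i \<in> Q\<^sub>j\<close>, resampling the coin of round \<open>j\<close> shows that
  \<open>i\<close> is matched with probability \<open>p\<^sup>i\<^sub>j/2\<close> plus one eighth of a bias term for each of the
  two proposed vertices, coming from the marks \<open>\<tau>\<close> left by earlier sender rounds.
  Each bias term is nonnegative: a sender mark on \<open>x\<close> comes in a pair (\<open>sel\<close>/\<open>nsel\<close>,
  differing only in the sender's choice \<open>\<ell>\<close>), and changing a selection away from \<open>i\<close>
  can only keep \<open>i\<close> available.
  If the previous proposal \<open>j'\<close> of \<open>i\<close> lies in the window and is randomized, the bias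
  of \<open>i\<close> at round \<open>j\<close> is exactly the mark of round \<open>j'\<close>, and resampling round \<open>j'\<close>
  evaluates it to \<open>p\<^sup>i\<^sub>j\<^sub>'/8\<close>. Hence \<open>\<Delta>\<mu>\<^sup>i\<^sub>j \<ge> p\<^sup>i\<^sub>j/2 + p\<^sup>i\<^sub>j\<^sub>'/64\<close>, and
  \<open>p\<^sup>i\<^sub>j\<^sub>' - \<Delta>\<mu>\<^sup>i\<^sub>j\<^sub>' \<le> p\<^sup>i\<^sub>j\<^sub>'/2\<close> gives the constant \<open>1/32\<close>.\<close>

section \<open>Derandomizing the algorithm\<close>

text \<open>The three fair bits of a round \<open>(s, a, b)\<close>: \<open>s\<close> decides sender/receiver; a sender
  selects \<open>pick Q a\<close> and marks \<open>pick Q b\<close>; a receiver inspects \<open>pick Q a\<close> and uses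
  \<open>b\<close> as its fallback choice.\<close>
type_synonym coin = "bool \<times> bool \<times> bool"

definition pick :: "'v set \<Rightarrow> bool \<Rightarrow> 'v" where
  "pick Q b = (if b then fst_el Q else snd_el Q)"

definition tau_step :: "nat \<Rightarrow> 'v set \<Rightarrow> nat \<Rightarrow> ('v \<Rightarrow> nat \<Rightarrow> tstate) \<Rightarrow> coin \<Rightarrow> ('v \<Rightarrow> nat \<Rightarrow> tstate)" where
  "tau_step d Q j tau c = (case c of (s, a, b) \<Rightarrow>
     if card Q = 1 then reset d (fst_el Q) j tau
     else if s then set_tau d (pick Q b) j (if a = b then Sel else NSel) (reset d (pick Q (\<not> b)) j tau)
     else reset d (snd_el Q) j (reset d (fst_el Q) j tau))"

definition sel_step :: "nat \<Rightarrow> 'v set \<Rightarrow> nat \<Rightarrow> ('v \<Rightarrow> nat \<Rightarrow> tstate) \<Rightarrow> coin \<Rightarrow> 'v" where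
  "sel_step d Q j tau c = (case c of (s, a, b) \<Rightarrow>
     if card Q = 1 then fst_el Q
     else if s then pick Q a
     else pick Q (case tau (pick Q a) j of Sel \<Rightarrow> \<not> a | NSel \<Rightarrow> a | Unk \<Rightarrow> b))"

definition state_step :: "nat \<Rightarrow> 'v set \<Rightarrow> nat \<Rightarrow> 'v ocr_state \<Rightarrow> coin \<Rightarrow> 'v ocr_state" where
  "state_step d Q j st c = (tau_step d Q j (fst st) c, snd st @ [sel_step d Q j (fst st) c])"

lemma pmf_of_set_UNIV_coin:
  "pmf_of_set (UNIV :: coin set) =
   pair_pmf (bernoulli_pmf (1/2)) (pair_pmf (bernoulli_pmf (1/2)) (bernoulli_pmf (1/2)))"
  by (rule pmf_eqI) (auto simp: pmf_pair card_UNIV_bool)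

lemma alg_step_eq_map_pmf_coin:
  "alg_step d Q j st = map_pmf (state_step d Q j st) (pmf_of_set UNIV)"
proof (cases "card Q = 1")
  case True
  then have "state_step d Q j st = (\<lambda>_. (reset d (fst_el Q) j (fst st), snd st @ [fst_el Q]))"
    by (auto simp: state_step_def tau_step_def sel_step_def split_beta)
  then show ?thesis
    using True by (simp add: alg_step_def Let_def map_pmf_const)
next
  case False
  let ?B = "bernoulli_pmf (1/2)"
  have "map_pmf (state_step d Q j st) (pmf_of_set UNIV) =
     ?B \<bind> (\<lambda>s. ?B \<bind> (\<lambda>a. ?B \<bind> (\<lambda>b. return_pmf (state_step d Q j st (s, a, b)))))"
    unfolding pmf_of_set_UNIV_coin pair_pmf_def map_bind_pmf map_return_pmf bind_assoc_pmf bind_return_pmf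
    by simp
  also have "\<dots> = alg_step d Q j st"
    unfolding alg_step_def Let_def using False
    apply simp
    apply (rule bind_pmf_cong, simp)
    subgoal for s
      apply (cases s)
       apply (simp add: state_step_def tau_step_def sel_step_def pick_def)
      apply (simp add: state_step_def tau_step_def sel_step_def pick_def)
      apply (rule bind_pmf_cong, simp)
      subgoal for m
        by (cases "fst st (if m then fst_el Q else snd_el Q) j") (simp_all add: bind_return_pmf)
      done
    done
  finally show ?thesis by simp
qed

fun tau_after :: "nat \<Rightarrow> 'v set list \<Rightarrow> coin list \<Rightarrow> nat \<Rightarrow> ('v \<Rightarrow> nat \<Rightarrow> tstate)" where
  "tau_after d Q cs 0 = (\<lambda>_ _. Unk)"
| "tau_after d Q cs (Suc k) = tau_step d (Q!k) (Suc k) (tau_after d Q cs k) (cs!k)"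

text \<open>Rounds are numbered from 1 but selections from 0: this is the vertex selected at round \<open>u + 1\<close>.\<close>
definition sel_at :: "nat \<Rightarrow> 'v set list \<Rightarrow> coin list \<Rightarrow> nat \<Rightarrow> 'v" where
  "sel_at d Q cs u = sel_step d (Q!u) (Suc u) (tau_after d Q cs u) (cs!u)"

definition selections :: "nat \<Rightarrow> 'v set list \<Rightarrow> coin list \<Rightarrow> 'v list" where
  "selections d Q cs = map (sel_at d Q cs) [0..<length Q]"

definition coin_lists :: "nat \<Rightarrow> coin list set" where
  "coin_lists n = {cs. length cs = n}"

lemma tau_after_cong: "(\<And>u. u < k \<Longrightarrow> cs!u = cs'!u) \<Longrightarrow> tau_after d Q cs k = tau_after d Q cs' k"
  by (induction k) auto

lemma sel_at_cong: "(\<And>u. u \<le> k \<Longrightarrow> cs!u = cs'!u) \<Longrightarrow> sel_at d Q cs k = sel_at d Q cs' k"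
  unfolding sel_at_def by (metis tau_after_cong less_imp_le order_refl)

lemma coin_lists_eq_lists: "coin_lists n = {xs. set xs \<subseteq> UNIV \<and> length xs = n}"
  by (simp add: coin_lists_def)

lemma finite_coin_lists [simp]: "finite (coin_lists n)"
  unfolding coin_lists_eq_lists by (rule finite_lists_length_eq) simp

lemma card_coin_lists: "card (coin_lists n) = 8 ^ n"
  unfolding coin_lists_eq_lists by (subst card_lists_length_eq) (simp_all add: card_UNIV_bool)

lemma coin_lists_not_empty [simp]: "coin_lists n \<noteq> {}"
  unfolding coin_lists_def by (metis (mono_tags) empty_Collect_eq length_replicate)

lemma pair_pmf_of_set:
  assumes "finite A" "A \<noteq> {}" "finite B" "B \<noteq> {}"
  shows "pair_pmf (pmf_of_set A) (pmf_of_set B) = pmf_of_set (A \<times> B)"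
proof (rule pmf_eqI)
  fix x :: "'a \<times> 'b"
  show "pmf (pair_pmf (pmf_of_set A) (pmf_of_set B)) x = pmf (pmf_of_set (A \<times> B)) x"
    using assms by (cases x) (simp add: pmf_pair card_cartesian_product indicator_def)
qed

lemma pmf_of_set_coin_lists_Suc:
  "pmf_of_set (coin_lists (Suc n)) =
   map_pmf (\<lambda>(cs, c). cs @ [c]) (pair_pmf (pmf_of_set (coin_lists n)) (pmf_of_set (UNIV :: coin set)))"
proof -
  have "map_pmf (\<lambda>(cs, c). cs @ [c]) (pmf_of_set (coin_lists n \<times> (UNIV :: coin set))) =
        pmf_of_set ((\<lambda>(cs, c). cs @ [c]) ` (coin_lists n \<times> UNIV))"
    by (rule map_pmf_of_set_inj) (auto simp: inj_on_def)
  moreover have "(\<lambda>(cs, c). cs @ [c]) ` (coin_lists n \<times> (UNIV :: coin set)) = coin_lists (Suc n)"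
  proof (intro equalityI subsetI)
    fix xs assume "xs \<in> coin_lists (Suc n)"
    then have "xs = butlast xs @ [last xs]" "butlast xs \<in> coin_lists n"
      by (auto simp: coin_lists_def) (metis append_butlast_last_id list.size(3) nat.distinct(1))
    then show "xs \<in> (\<lambda>(cs, c). cs @ [c]) ` (coin_lists n \<times> UNIV)"
      by (metis (no_types, lifting) UNIV_I mem_Sigma_iff pair_imageI)
  qed (auto simp: coin_lists_def)
  ultimately show ?thesis by (simp add: pair_pmf_of_set)
qed

lemma alg_run_eq_map_pmf_coin_lists:
  "alg_run d Q k = map_pmf (\<lambda>cs. (tau_after d Q cs k, map (sel_at d Q cs) [0..<k])) (pmf_of_set (coin_lists k))"
proof (induction k)
  case 0
  then show ?case by (simp add: coin_lists_def pmf_of_set_singleton)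
next
  case (Suc k)
  have "alg_run d Q (Suc k) = pmf_of_set (coin_lists k) \<bind>
      (\<lambda>cs. map_pmf (state_step d (Q!k) (Suc k) (tau_after d Q cs k, map (sel_at d Q cs) [0..<k])) (pmf_of_set UNIV))"
    by (simp add: Suc alg_step_eq_map_pmf_coin bind_map_pmf)
  also have "\<dots> = pmf_of_set (coin_lists k) \<bind>
      (\<lambda>cs. map_pmf (\<lambda>c. (tau_after d Q (cs @ [c]) (Suc k), map (sel_at d Q (cs @ [c])) [0..<Suc k])) (pmf_of_set UNIV))"
  proof (rule bind_pmf_cong[OF refl], rule map_pmf_cong[OF refl])
    fix cs c assume "cs \<in> set_pmf (pmf_of_set (coin_lists k))"
    then have "cs \<in> coin_lists k" by simp
    then have len: "length cs = k" by (simp add: coin_lists_def)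
    have tau: "tau_after d Q (cs @ [c]) k = tau_after d Q cs k" and ck: "(cs @ [c])!k = c"
      by (rule tau_after_cong, simp add: len nth_append, simp add: len[symmetric])
    have sel: "sel_at d Q (cs @ [c]) u = sel_at d Q cs u" if "u < k" for u
      by (rule sel_at_cong) (use that in \<open>simp add: len nth_append\<close>)
    have sel_last: "sel_at d Q (cs @ [c]) k = sel_step d (Q!k) (Suc k) (tau_after d Q cs k) c"
      by (simp add: sel_at_def tau ck)
    show "state_step d (Q!k) (Suc k) (tau_after d Q cs k, map (sel_at d Q cs) [0..<k]) c =
          (tau_after d Q (cs @ [c]) (Suc k), map (sel_at d Q (cs @ [c])) [0..<Suc k])"
      by (simp add: state_step_def tau sel sel_last len ck)
  qed
  also have "\<dots> = map_pmf (\<lambda>cs. (tau_after d Q cs (Suc k), map (sel_at d Q cs) [0..<Suc k]))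
                    (pmf_of_set (coin_lists (Suc k)))"
    unfolding pmf_of_set_coin_lists_Suc pair_pmf_def map_bind_pmf map_return_pmf bind_assoc_pmf bind_return_pmf
    by (simp add: map_pmf_def)
  finally show ?case .
qed

lemma length_selections [simp]: "length (selections d Q cs) = length Q"
  by (simp add: selections_def)

lemma selections_nth: "u < length Q \<Longrightarrow> selections d Q cs ! u = sel_at d Q cs u"
  by (simp add: selections_def)

definition valid_proposals :: "'v set list \<Rightarrow> bool" where
  "valid_proposals Q \<longleftrightarrow> (\<forall>u<length Q. card (Q!u) = 1 \<or> card (Q!u) = 2)"

lemma valid_proposals_nth: "valid_proposals Q \<Longrightarrow> u < length Q \<Longrightarrow> card (Q!u) = 1 \<or> card (Q!u) = 2"
  by (simp add: valid_proposals_def)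

lemma fst_el_in: "Q \<noteq> {} \<Longrightarrow> fst_el Q \<in> Q"
  unfolding fst_el_def by (rule someI_ex) auto

lemma card_1_eq_fst_el: "card Q = 1 \<Longrightarrow> Q = {fst_el Q}"
  by (metis card_1_singletonE fst_el_in insert_not_empty singletonD)

lemma card_2_els:
  assumes "card Q = 2"
  shows "fst_el Q \<in> Q" "snd_el Q \<in> Q" "fst_el Q \<noteq> snd_el Q" "\<And>v. v \<in> Q \<Longrightarrow> v = fst_el Q \<or> v = snd_el Q"
proof -
  have fin: "finite Q" using assms card.infinite by force
  show f: "fst_el Q \<in> Q" using assms by (intro fst_el_in) force
  have "card (Q - {fst_el Q}) = 1" using assms f fin by (simp add: card_Diff_singleton)
  then have "Q - {fst_el Q} \<noteq> {}" by force
  then have "snd_el Q \<in> Q - {fst_el Q}"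
    unfolding snd_el_def by (intro someI_ex[of "\<lambda>y. y \<in> Q - {fst_el Q}"]) blast
  then show s: "snd_el Q \<in> Q" and n: "fst_el Q \<noteq> snd_el Q" by auto
  show "v = fst_el Q \<or> v = snd_el Q" if v: "v \<in> Q" for v
  proof (rule ccontr)
    assume "\<not> (v = fst_el Q \<or> v = snd_el Q)"
    then have "card {v, fst_el Q, snd_el Q} = 3" using n by simp
    moreover have "card {v, fst_el Q, snd_el Q} \<le> card Q" using f s v fin by (intro card_mono) auto
    ultimately show False using assms by simp
  qed
qed

lemma pick_in: "card Q = 2 \<Longrightarrow> pick Q b \<in> Q"
  using card_2_els(1,2) by (auto simp: pick_def)

lemma pick_eq_iff: "card Q = 2 \<Longrightarrow> pick Q b = pick Q b' \<longleftrightarrow> b = b'"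
  using card_2_els(3)[of Q] by (cases b; cases b') (auto simp: pick_def)

lemma ex_pick: "card Q = 2 \<Longrightarrow> v \<in> Q \<Longrightarrow> \<exists>b. v = pick Q b"
  using card_2_els(4) unfolding pick_def by (metis (full_types))

lemma ex_other_el: "card Q = 2 \<Longrightarrow> i \<in> Q \<Longrightarrow> \<exists>k. k \<in> Q \<and> k \<noteq> i"
  using card_2_els(1,2,3) by metis

lemma sel_step_in: "card Q = 1 \<or> card Q = 2 \<Longrightarrow> sel_step d Q j tau c \<in> Q"
  using pick_in card_1_eq_fst_el by (cases c) (auto simp: sel_step_def)

lemma sel_step_cong:
  "(\<And>v. v \<in> Q \<Longrightarrow> tau v = tau' v) \<Longrightarrow> card Q = 1 \<or> card Q = 2 \<Longrightarrow>
   sel_step d Q j tau c = sel_step d Q j tau' c"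
  using pick_in by (cases c) (fastforce simp: sel_step_def)

lemma tau_step_not_in:
  assumes "card Q = 1 \<or> card Q = 2" "v \<notin> Q"
  shows "tau_step d Q j tau c v = tau v"
proof -
  have "v \<noteq> fst_el Q" using assms card_1_eq_fst_el card_2_els(1) by (metis insertI1)
  moreover have "card Q = 2 \<Longrightarrow> v \<noteq> snd_el Q" using assms card_2_els(2) by metis
  moreover have "card Q = 2 \<Longrightarrow> v \<noteq> pick Q b" for b using assms pick_in by metis
  ultimately show ?thesis
    using assms(1) by (cases c) (auto simp: tau_step_def set_tau_def reset_def)
qed

lemma tau_step_cong: "tau v = tau' v \<Longrightarrow> tau_step d Q j tau c v = tau_step d Q j tau' c v"
  by (cases c) (auto simp: tau_step_def set_tau_def reset_def)

lemma tau_step_outside_window: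
  "\<not> (j + 1 \<le> t \<and> t + 1 \<le> j + d) \<Longrightarrow> tau_step d Q j tau c v t = tau v t"
  by (cases c) (auto simp: tau_step_def set_tau_def reset_def)

lemma tau_step_sender_other:
  "card Q = 2 \<Longrightarrow> v \<noteq> pick Q b \<Longrightarrow> tau_step d Q j tau (True, a, b) v = tau_step d Q j tau (True, a', b) v"
  by (simp add: tau_step_def set_tau_def reset_def)

text \<open>The mark a round with coin \<open>c\<close> leaves on \<open>v \<in> Q\<close> for the next \<open>d - 1\<close> rounds.\<close>
definition mark :: "'v set \<Rightarrow> coin \<Rightarrow> 'v \<Rightarrow> tstate" where
  "mark Q c v = (case c of (s, a, b) \<Rightarrow>
     if card Q = 2 \<and> s \<and> pick Q b = v then (if a = b then Sel else NSel) else Unk)"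

lemma tau_step_in_window:
  assumes "card Q = 1 \<or> card Q = 2" "v \<in> Q" "j + 1 \<le> t" "t + 1 \<le> j + d"
  shows "tau_step d Q j tau c v t = mark Q c v"
proof (cases "card Q = 1")
  case True
  then have "v = fst_el Q" using assms card_1_eq_fst_el by blast
  then show ?thesis
    using True assms by (cases c) (auto simp: tau_step_def set_tau_def reset_def mark_def)
next
  case False
  then have c2: "card Q = 2" using assms by auto
  obtain s a b where c: "c = (s, a, b)" by (cases c)
  obtain b0 where v: "v = pick Q b0" using ex_pick[OF c2 assms(2)] by blast
  have els: "snd_el Q = pick Q False" "fst_el Q = pick Q True" by (auto simp: pick_def)
  have ne: "pick Q True \<noteq> pick Q False" using pick_eq_iff[OF c2] by blast
  show ?thesis
    using assms(3,4) c2 ne unfolding c v tau_step_def mark_def set_tau_def reset_def els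
    by (cases s; cases b0; cases b) auto
qed

section \<open>Greedy matching\<close>

lemma matched_rounds_bounds: "t \<in> matched_rounds d s i j \<Longrightarrow> 1 \<le> t \<and> t \<le> j"
  by (induction j) (auto split: if_splits)

lemma not_matched_0 [simp]: "\<not> matched d s i 0"
  by (simp add: matched_def)

lemma mem_matched_rounds_iff: "t \<in> matched_rounds d s i j \<longleftrightarrow> t \<le> j \<and> matched d s i t"
proof (induction j)
  case 0
  then show ?case using matched_rounds_bounds[of t d s i 0] by (auto simp: matched_def)
next
  case (Suc j)
  show ?case
  proof (cases "t = Suc j")
    case True
    then show ?thesis using matched_rounds_bounds[of "Suc j" d s i j] by (auto simp: matched_def)
  next
    case False
    then have "t \<in> matched_rounds d s i (Suc j) \<longleftrightarrow> t \<in> matched_rounds d s i j" by auto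
    then show ?thesis using Suc False by auto
  qed
qed

lemma matched_Suc:
  "matched d s i (Suc j) \<longleftrightarrow> j < length s \<and> s!j = i \<and>
    (\<forall>t. 1 \<le> t \<and> t \<le> j \<and> Suc j < t + d \<longrightarrow> \<not> matched d s i t)"
proof -
  have "matched d s i (Suc j) \<longleftrightarrow> Suc j \<le> length s \<and> s!j = i \<and>
      (\<forall>t\<in>matched_rounds d s i j. \<not> (Suc j - d < t))"
    using matched_rounds_bounds[of "Suc j" d s i j] by (auto simp: matched_def)
  moreover have "(Suc j - d < t) \<longleftrightarrow> Suc j < t + d" if "1 \<le> t" for t
    using that by arith
  ultimately show ?thesis
    using mem_matched_rounds_iff[of _ d s i j] matched_rounds_bounds[of _ d s i j] by (auto simp: Suc_le_eq)
qed

text \<open>The event whose probability is \<open>p\<^sup>i\<^sub>j\<close>, see \<open>avail_eq_count\<close> below.\<close>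
definition free_at :: "nat \<Rightarrow> 'v list \<Rightarrow> 'v \<Rightarrow> nat \<Rightarrow> bool" where
  "free_at d s i j \<longleftrightarrow> (\<forall>t. 1 \<le> t \<and> t < j \<and> j < t + d \<longrightarrow> \<not> matched d s i t)"

lemma matched_iff_free_at:
  "matched d s i j \<longleftrightarrow> 1 \<le> j \<and> j \<le> length s \<and> s!(j-1) = i \<and> free_at d s i j"
proof (cases j)
  case (Suc j')
  then show ?thesis
    using matched_Suc[of d s i j'] unfolding free_at_def by (auto simp: less_Suc_eq_le Suc_le_eq)
qed simp

lemma matched_cong:
  assumes "length s = length s'" "\<And>u. u < J \<Longrightarrow> (s!u = i) = (s'!u = i)" "t \<le> J"
  shows "matched d s i t = matched d s' i t"
  using assms(3)
proof (induction t rule: less_induct)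
  case (less t)
  show ?case
  proof (cases t)
    case (Suc t')
    have "matched d s i u = matched d s' i u" if "u \<le> t'" for u
      using less that Suc by auto
    moreover have "(s!t' = i) = (s'!t' = i)" using assms(2) less Suc by auto
    ultimately show ?thesis unfolding Suc matched_Suc using assms(1) by auto
  qed simp
qed

lemma matched_window_unique:
  assumes "matched d s i t1" "matched d s i t2" "t1 < t2" "t2 < t1 + d"
  shows False
  using assms matched_iff_free_at[of d s i t2] matched_iff_free_at[of d s i t1] unfolding free_at_def by auto

lemma of_bool_not_free_at:
  assumes "d \<ge> 1"
  shows "of_bool (\<not> free_at d s i j) = (\<Sum>t\<in>{max 1 (j+1-d)..<j}. of_bool (matched d s i t) :: real)"
proof -
  have window: "t \<in> {max 1 (j+1-d)..<j} \<longleftrightarrow> 1 \<le> t \<and> t < j \<and> j < t + d" for t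
    using assms by auto
  show ?thesis
  proof (cases "free_at d s i j")
    case True
    then show ?thesis unfolding free_at_def window by (auto intro: sum.neutral)
  next
    case False
    then obtain t0 where t0: "1 \<le> t0" "t0 < j" "j < t0 + d" "matched d s i t0"
      unfolding free_at_def by auto
    have "matched d s i t \<longleftrightarrow> t = t0" if "t \<in> {max 1 (j+1-d)..<j}" for t
      using matched_window_unique[of d s i t t0] matched_window_unique[of d s i t0 t] t0 that window
      by (metis linorder_neqE_nat add_less_cancel_right less_trans)
    then have "(\<Sum>t\<in>{max 1 (j+1-d)..<j}. of_bool (matched d s i t) :: real)
        = (\<Sum>t\<in>{max 1 (j+1-d)..<j}. if t = t0 then 1 else 0)"
      by (intro sum.cong refl) auto
    also have "\<dots> = 1" using t0 window by simp
    finally show ?thesis using False by simp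
  qed
qed

lemma matched_change_unmatched_round:
  assumes "length s = length s'" "\<And>u. u < J \<Longrightarrow> u \<noteq> r \<Longrightarrow> s!u = s'!u" "s'!r \<noteq> i"
    "\<not> matched d s i (Suc r)" "t \<le> J"
  shows "matched d s' i t = matched d s i t"
  using assms(5)
proof (induction t rule: less_induct)
  case (less t)
  show ?case
  proof (cases t)
    case (Suc t')
    have IH: "matched d s' i u = matched d s i u" if "u \<le> t'" for u
      using less that Suc by auto
    show ?thesis
    proof (cases "t' = r")
      case True
      then show ?thesis using assms(3,4) Suc by (simp add: matched_Suc)
    next
      case False
      then have "s!t' = s'!t'" using assms(2) less Suc by auto
      then show ?thesis unfolding Suc matched_Suc using IH assms(1) by auto
    qed
  qed simp
qed

lemma tau_after_update: "u \<le> r \<Longrightarrow> tau_after d Q (cs[r := x]) u = tau_after d Q cs u"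
  by (rule tau_after_cong) auto

lemma sel_at_update: "u < r \<Longrightarrow> sel_at d Q (cs[r := x]) u = sel_at d Q cs u"
  by (rule sel_at_cong) auto

lemma matched_update:
  assumes "r < length Q" "t \<le> r"
  shows "matched d (selections d Q (cs[r := x])) i t = matched d (selections d Q cs) i t"
  by (rule matched_cong[of _ _ r]) (use assms in \<open>auto simp: selections_nth sel_at_update\<close>)

lemma free_at_update:
  assumes "r < length Q" "j \<le> Suc r"
  shows "free_at d (selections d Q (cs[r := x])) i j = free_at d (selections d Q cs) i j"
  unfolding free_at_def using matched_update[OF assms(1), of _ d cs x i] assms(2) by auto

lemma matched_selections_iff:
  assumes "1 \<le> j" "j \<le> length Q"
  shows "matched d (selections d Q cs) i j \<longleftrightarrow> sel_at d Q cs (j-1) = i \<and> free_at d (selections d Q cs) i j"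
  using assms by (simp add: matched_iff_free_at selections_nth)

lemma sel_at_in: "valid_proposals Q \<Longrightarrow> u < length Q \<Longrightarrow> sel_at d Q cs u \<in> Q!u"
  unfolding sel_at_def valid_proposals_def by (intro sel_step_in) auto

lemma tau_after_not_proposed:
  assumes "valid_proposals Q" "b \<le> length Q" "a \<le> b" "\<And>u. a \<le> u \<Longrightarrow> u < b \<Longrightarrow> v \<notin> Q!u"
  shows "tau_after d Q cs b v = tau_after d Q cs a v"
  using assms(2,3,4)
proof (induction b)
  case (Suc b)
  show ?case
  proof (cases "a = Suc b")
    case False
    then have "a \<le> b" using Suc by auto
    moreover have "tau_after d Q cs (Suc b) v = tau_after d Q cs b v"
      using Suc \<open>a \<le> b\<close> assms(1) by (simp add: tau_step_not_in valid_proposals_def)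
    ultimately show ?thesis using Suc by simp
  qed simp
qed simp

lemma tau_after_unmarked:
  assumes "valid_proposals Q" "k \<le> length Q" "\<And>r. r < k \<Longrightarrow> v \<in> Q!r \<Longrightarrow> r + 1 + d \<le> t"
  shows "tau_after d Q cs k v t = Unk"
  using assms(2,3)
proof (induction k)
  case (Suc k)
  then have IH: "tau_after d Q cs k v t = Unk" by auto
  show ?case
  proof (cases "v \<in> Q!k")
    case True
    then have "k + 1 + d \<le> t" using Suc by auto
    then show ?thesis using IH by (simp add: tau_step_outside_window)
  next
    case False
    then show ?thesis using IH Suc assms(1) by (simp add: tau_step_not_in valid_proposals_def)
  qed
qed simp

lemma tau_after_eq_mark:
  assumes "valid_proposals Q" "k \<le> length Q" "r < k" "v \<in> Q!r" "\<And>u. r < u \<Longrightarrow> u < k \<Longrightarrow> v \<notin> Q!u"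
    "r + 2 \<le> t" "t < r + 1 + d"
  shows "tau_after d Q cs k v t = mark (Q!r) (cs!r) v"
proof -
  have "tau_after d Q cs k v = tau_after d Q cs (Suc r) v"
    by (rule tau_after_not_proposed) (use assms in auto)
  moreover have "tau_after d Q cs (Suc r) v t = mark (Q!r) (cs!r) v"
    using assms by (simp add: tau_step_in_window valid_proposals_def)
  ultimately show ?thesis by simp
qed

lemma tau_after_cases:
  assumes "valid_proposals Q" "j \<le> length Q"
  obtains "\<And>cs. tau_after d Q cs (j-1) x j = Unk"
  | r where "r < j-1" "x \<in> Q!r" "j < r + 1 + d" "\<And>u. r < u \<Longrightarrow> u < j-1 \<Longrightarrow> x \<notin> Q!u"
proof -
  define R where "R = {r. r < j-1 \<and> x \<in> Q!r \<and> j < r + 1 + d}"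
  have "finite R" unfolding R_def by auto
  show ?thesis
  proof (cases "R = {}")
    case True
    have "tau_after d Q cs (j-1) x j = Unk" for cs
      by (rule tau_after_unmarked) (use assms True in \<open>auto simp: R_def\<close>)
    then show ?thesis using that(1) by blast
  next
    case False
    define r where "r = Max R"
    have "r \<in> R" using False \<open>finite R\<close> r_def by simp
    moreover have "x \<notin> Q!u" if "r < u" "u < j-1" for u
    proof
      assume "x \<in> Q!u"
      then have "u \<in> R" using \<open>r \<in> R\<close> that unfolding R_def by auto
      then show False using that Max_ge[OF \<open>finite R\<close>, of u] r_def by simp
    qed
    ultimately show ?thesis using that(2)[of r] unfolding R_def by blast
  qed
qed

lemma prev_SomeD:
  assumes "prev Q i j = Some j'"
  shows "1 \<le> j'" "j' < j" "i \<in> Q!(j'-1)" "\<And>u. j' < u \<Longrightarrow> u < j \<Longrightarrow> i \<notin> Q!(u-1)"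
proof -
  let ?P = "\<lambda>j'. 1 \<le> j' \<and> j' < j \<and> i \<in> Q ! (j' - 1)"
  have ex: "\<exists>j'. ?P j'" and j': "j' = Greatest ?P"
    using assms unfolding prev_def by (auto split: if_splits)
  have bound: "\<And>y. ?P y \<Longrightarrow> y \<le> j" by auto
  have "?P j'" using ex GreatestI_nat[of ?P _ j, OF _ bound] j' by blast
  then show "1 \<le> j'" "j' < j" "i \<in> Q!(j'-1)" by auto
  show "i \<notin> Q!(u-1)" if "j' < u" "u < j" for u
    using that \<open>?P j'\<close> Greatest_le_nat[of ?P u j, OF _ bound] j' by fastforce
qed

section \<open>Sums over coin lists\<close>

lemma sum_coin_lists_involution:
  fixes f :: "coin list \<Rightarrow> real"
  assumes "\<And>c. g (g c) = c" "r < n"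
  shows "(\<Sum>cs\<in>coin_lists n. f cs) = (\<Sum>cs\<in>coin_lists n. f (cs[r := g (cs!r)]))"
  by (rule sum.reindex_bij_witness[of _ "\<lambda>cs. cs[r := g (cs!r)]" "\<lambda>cs. cs[r := g (cs!r)]"])
     (use assms in \<open>auto simp: coin_lists_def\<close>)

fun coin_xor :: "coin \<Rightarrow> coin \<Rightarrow> coin" where
  "coin_xor (a1, a2, a3) (b1, b2, b3) = (a1 \<noteq> b1, a2 \<noteq> b2, a3 \<noteq> b3)"

lemma coin_xor_cancel_left: "coin_xor a (coin_xor a b) = b"
  by (cases a; cases b) auto

lemma coin_xor_cancel_right: "coin_xor (coin_xor a b) b = a"
  by (cases a; cases b) auto

lemma card_UNIV_coin: "card (UNIV :: coin set) = 8"
  by (simp add: card_UNIV_bool)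

text \<open>If \<open>H cs\<close> ignores the coin of round \<open>r + 1\<close>, that coin can be replaced by an independent
  uniform one; the proof averages over the translates \<open>cs!r \<mapsto> coin_xor a (cs!r)\<close>.\<close>
lemma sum_coin_lists_resample:
  fixes H :: "coin list \<Rightarrow> coin \<Rightarrow> real"
  assumes "r < n" "\<And>cs x c. H (cs[r := x]) c = H cs c"
  shows "(\<Sum>cs\<in>coin_lists n. H cs (cs!r)) = (\<Sum>cs\<in>coin_lists n. \<Sum>c\<in>UNIV. H cs c) / 8"
proof -
  have translate: "(\<Sum>cs\<in>coin_lists n. H cs (cs!r)) = (\<Sum>cs\<in>coin_lists n. H cs (coin_xor a (cs!r)))" for a
  proof -
    have "(\<Sum>cs\<in>coin_lists n. H cs (cs!r)) =
        (\<Sum>cs\<in>coin_lists n. H (cs[r := coin_xor a (cs!r)]) ((cs[r := coin_xor a (cs!r)])!r))"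
      by (rule sum_coin_lists_involution[OF coin_xor_cancel_left assms(1)])
    also have "\<dots> = (\<Sum>cs\<in>coin_lists n. H cs (coin_xor a (cs!r)))"
      by (rule sum.cong[OF refl]) (use assms in \<open>simp add: coin_lists_def\<close>)
    finally show ?thesis .
  qed
  have average: "(\<Sum>a\<in>UNIV. H cs (coin_xor a b)) = (\<Sum>c\<in>UNIV. H cs c)" for cs b
    by (rule sum.reindex_bij_witness[of _ "\<lambda>c. coin_xor c b" "\<lambda>c. coin_xor c b"])
       (auto simp: coin_xor_cancel_right)
  have "8 * (\<Sum>cs\<in>coin_lists n. H cs (cs!r)) = (\<Sum>a\<in>(UNIV :: coin set). \<Sum>cs\<in>coin_lists n. H cs (cs!r))"
    by (simp add: card_UNIV_coin)
  also have "\<dots> = (\<Sum>cs\<in>coin_lists n. \<Sum>a\<in>UNIV. H cs (coin_xor a (cs!r)))"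
    using translate by (simp add: sum.swap[of _ UNIV])
  also have "\<dots> = (\<Sum>cs\<in>coin_lists n. \<Sum>c\<in>UNIV. H cs c)"
    using average by simp
  finally show ?thesis by simp
qed

lemma sum_UNIV_coin:
  fixes f :: "coin \<Rightarrow> real"
  shows "(\<Sum>c\<in>UNIV. f c) =
    f (True, True, True) + f (True, True, False) + f (True, False, True) + f (True, False, False) +
    f (False, True, True) + f (False, True, False) + f (False, False, True) + f (False, False, False)"
proof -
  have "(UNIV :: coin set) = {(True, True, True), (True, True, False), (True, False, True), (True, False, False),
      (False, True, True), (False, True, False), (False, False, True), (False, False, False)}"
    by auto
  show ?thesis unfolding \<open>UNIV = _\<close> by simp
qed

text \<open>How a mark on \<open>x\<close> shifts the number of the eight coins for which a randomized round
  selects \<open>i\<close> (four when nothing is marked).\<close>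
definition sel_bias :: "'v \<Rightarrow> 'v \<Rightarrow> tstate \<Rightarrow> real" where
  "sel_bias i x m = (case m of Unk \<Rightarrow> 0 | Sel \<Rightarrow> (if x = i then -1 else 1) | NSel \<Rightarrow> (if x = i then 1 else -1))"

lemma sum_coin_sel_step:
  assumes "card Q = 2" "i = pick Q b" "k = pick Q (\<not> b)"
  shows "(\<Sum>c\<in>UNIV. of_bool (sel_step d Q j tau c = i)) = 4 + sel_bias i i (tau i j) + sel_bias i k (tau k j)"
  using assms pick_eq_iff[OF assms(1), of True False] unfolding sum_UNIV_coin
  by (cases b; cases "tau i j"; cases "tau k j") (simp_all add: sel_step_def sel_bias_def)

lemma sum_coin_mark_bias:
  assumes "card Q = 2" "i = pick Q b"
  shows "(\<Sum>c\<in>UNIV. of_bool (P \<and> \<not> (sel_step d Q j tau c = i \<and> A)) * sel_bias i i (mark Q c i)) =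
    of_bool P - of_bool (P \<and> \<not> A)"
  using assms pick_eq_iff[OF assms(1), of True False] unfolding sum_UNIV_coin
  by (cases b) (simp_all add: sel_step_def sel_bias_def mark_def)

section \<open>Counting form of the two probabilities\<close>

definition count_matched :: "nat \<Rightarrow> 'v set list \<Rightarrow> 'v \<Rightarrow> nat \<Rightarrow> real" where
  "count_matched d Q i j = (\<Sum>cs\<in>coin_lists (length Q). of_bool (matched d (selections d Q cs) i j))"

definition count_free :: "nat \<Rightarrow> 'v set list \<Rightarrow> 'v \<Rightarrow> nat \<Rightarrow> real" where
  "count_free d Q i j = (\<Sum>cs\<in>coin_lists (length Q). of_bool (free_at d (selections d Q cs) i j))"

lemma count_free_nonneg: "0 \<le> count_free d Q i j"
  unfolding count_free_def by (rule sum_nonneg) simp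

lemma dmu_eq_count: "dmu d Q i j = count_matched d Q i j / 8 ^ length Q"
proof -
  have "dmu d Q i j =
      real (card (coin_lists (length Q) \<inter> {cs. matched d (selections d Q cs) i j})) / 8 ^ length Q"
    by (simp add: dmu_def alg_run_eq_map_pmf_coin_lists measure_pmf_of_set card_coin_lists
        selections_def vimage_def)
  then show ?thesis by (simp add: count_matched_def)
qed

lemma avail_eq_count:
  assumes "d \<ge> 1"
  shows "avail d Q i j = count_free d Q i j / 8 ^ length Q"
proof -
  let ?n = "length Q" and ?W = "{max 1 (j+1-d)..<j}"
  have "count_free d Q i j = (\<Sum>cs\<in>coin_lists ?n. 1 - of_bool (\<not> free_at d (selections d Q cs) i j))"
    unfolding count_free_def by (rule sum.cong) auto
  also have "\<dots> = (\<Sum>cs\<in>coin_lists ?n. 1 - (\<Sum>t\<in>?W. of_bool (matched d (selections d Q cs) i t)))"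
    by (simp only: of_bool_not_free_at[OF assms])
  also have "\<dots> = 8 ^ ?n - (\<Sum>t\<in>?W. count_matched d Q i t)"
    unfolding count_matched_def sum_subtractf by (subst sum.swap) (simp add: card_coin_lists)
  finally have "count_free d Q i j = 8 ^ ?n - (\<Sum>t\<in>?W. count_matched d Q i t)" .
  moreover have "avail d Q i j = 1 - (\<Sum>t\<in>?W. count_matched d Q i t) / 8 ^ ?n"
    by (simp add: avail_def dmu_eq_count sum_divide_distrib)
  ultimately show ?thesis by (simp add: field_simps)
qed

section \<open>The bias of a mark\<close>

text \<open>The contribution of the mark on \<open>x\<close> at round \<open>j\<close> to the count of matchings of \<open>i\<close> at \<open>j\<close>.\<close>
definition mark_bias :: "nat \<Rightarrow> 'v set list \<Rightarrow> 'v \<Rightarrow> 'v \<Rightarrow> nat \<Rightarrow> real" where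
  "mark_bias d Q i x j = (\<Sum>cs\<in>coin_lists (length Q).
     of_bool (free_at d (selections d Q cs) i j) * sel_bias i x (tau_after d Q cs (j-1) x j))"

lemma count_matched_eq_free_sel:
  assumes "1 \<le> j" "j \<le> length Q"
  shows "count_matched d Q i j = (\<Sum>cs\<in>coin_lists (length Q).
    of_bool (free_at d (selections d Q cs) i j) * of_bool (sel_at d Q cs (j-1) = i))"
  unfolding count_matched_def by (rule sum.cong[OF refl]) (simp only: matched_selections_iff[OF assms] of_bool_conj mult.commute)

lemma count_matched_deterministic_round:
  assumes "1 \<le> j" "j \<le> length Q" "card (Q!(j-1)) = 1" "i \<in> Q!(j-1)"
  shows "count_matched d Q i j = count_free d Q i j"
proof -
  have "i = fst_el (Q!(j-1))" using assms(4) card_1_eq_fst_el[OF assms(3)] by blast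
  then have "sel_at d Q cs (j-1) = i" for cs
    using assms(3) by (cases "cs!(j-1)") (simp add: sel_at_def sel_step_def)
  then show ?thesis unfolding count_matched_eq_free_sel[OF assms(1,2)] count_free_def by simp
qed

lemma count_matched_randomized_round:
  assumes "1 \<le> j" "j \<le> length Q" "card (Q!(j-1)) = 2" "i \<in> Q!(j-1)" "k \<in> Q!(j-1)" "k \<noteq> i"
  shows "count_matched d Q i j = count_free d Q i j / 2 + (mark_bias d Q i i j + mark_bias d Q i k j) / 8"
proof -
  let ?n = "length Q" and ?free = "\<lambda>cs. of_bool (free_at d (selections d Q cs) i j) :: real"
  obtain b where b: "i = pick (Q!(j-1)) b" using ex_pick[OF assms(3,4)] by blast
  obtain b' where "k = pick (Q!(j-1)) b'" using ex_pick[OF assms(3,5)] by blast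
  then have k: "k = pick (Q!(j-1)) (\<not> b)" using b assms(6) by (cases b; cases b') auto
  define H where "H cs c = ?free cs * of_bool (sel_step d (Q!(j-1)) j (tau_after d Q cs (j-1)) c = i)" for cs c
  have "count_matched d Q i j = (\<Sum>cs\<in>coin_lists ?n. H cs (cs!(j-1)))"
    unfolding count_matched_eq_free_sel[OF assms(1,2)] H_def sel_at_def using assms(1) by simp
  also have "\<dots> = (\<Sum>cs\<in>coin_lists ?n. \<Sum>c\<in>UNIV. H cs c) / 8"
  proof (rule sum_coin_lists_resample)
    fix cs x c
    show "H (cs[j-1 := x]) c = H cs c"
      unfolding H_def using free_at_update[of "j-1" Q j d cs x i] tau_after_update[of "j-1" "j-1" d Q cs x] assms(1,2)
      by simp
  qed (use assms in simp)
  also have "\<dots> = (\<Sum>cs\<in>coin_lists ?n. 4 * ?free cs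
       + ?free cs * sel_bias i i (tau_after d Q cs (j-1) i j)
       + ?free cs * sel_bias i k (tau_after d Q cs (j-1) k j)) / 8"
    unfolding H_def sum_distrib_left[symmetric] sum_coin_sel_step[OF assms(3) b k] by (simp add: algebra_simps)
  also have "\<dots> = count_free d Q i j / 2 + (mark_bias d Q i i j + mark_bias d Q i k j) / 8"
    unfolding sum.distrib count_free_def mark_bias_def sum_distrib_left[symmetric] by simp
  finally show ?thesis .
qed

text \<open>Only the mark on \<open>x\<close> changes, and \<open>x\<close> is not proposed again before \<open>j\<close>,
  so every later round makes the same choice.\<close>
lemma free_at_update_sender_sel:
  assumes valid: "valid_proposals Q" and j: "j \<le> length Q" and len: "length cs = length Q"
    and r: "r < j - 1" and window: "j < r + 1 + d"
    and c2: "card (Q!r) = 2" and cr: "cs!r = (True, a, b)" and x: "x = pick (Q!r) b"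
    and x_later: "\<And>u. r < u \<Longrightarrow> u < j-1 \<Longrightarrow> x \<notin> Q!u"
    and sel: "sel_at d Q (cs[r := (True, a', b)]) r \<noteq> i"
    and free: "free_at d (selections d Q cs) i j"
  shows "free_at d (selections d Q (cs[r := (True, a', b)])) i j"
proof -
  define cs' where "cs' = cs[r := (True, a', b)]"
  have cs'_r: "cs'!r = (True, a', b)" using r j len by (simp add: cs'_def)
  have cs'_other: "cs'!u = cs!u" if "u \<noteq> r" for u using that by (simp add: cs'_def)
  have tau: "\<forall>v. v \<noteq> x \<longrightarrow> tau_after d Q cs' (Suc r + m) v = tau_after d Q cs (Suc r + m) v" for m
  proof (induction m)
    case 0
    have "tau_after d Q cs' r = tau_after d Q cs r" unfolding cs'_def by (rule tau_after_update) simp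
    then show ?case using cs'_r cr c2 x by (simp add: tau_step_sender_other)
  next
    case (Suc m)
    have "cs' ! (Suc r + m) = cs ! (Suc r + m)" by (rule cs'_other) simp
    then show ?case using Suc by (auto intro: tau_step_cong)
  qed
  have sel_other: "sel_at d Q cs' u = sel_at d Q cs u" if "u < j-1" "u \<noteq> r" for u
  proof (cases "u < r")
    case True
    then show ?thesis unfolding cs'_def by (rule sel_at_update)
  next
    case False
    then have "r < u" using that by simp
    then obtain m where m: "u = Suc r + m" using less_imp_Suc_add by blast
    have "tau_after d Q cs' u v = tau_after d Q cs u v" if "v \<in> Q!u" for v
      using tau[of m] m \<open>u < j-1\<close> x_later[of u] that False \<open>u \<noteq> r\<close> by auto
    moreover have "card (Q!u) = 1 \<or> card (Q!u) = 2" using valid_proposals_nth[OF valid] that j by simp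
    ultimately show ?thesis
      unfolding sel_at_def cs'_other[OF that(2)] by (rule sel_step_cong)
  qed
  have "\<not> matched d (selections d Q cs) i (Suc r)" using free r window unfolding free_at_def by auto
  then have "matched d (selections d Q cs') i t = matched d (selections d Q cs) i t" if "t \<le> j-1" for t
    using that j sel_other sel r
    by (intro matched_change_unmatched_round[of _ _ "j-1" r]) (auto simp: selections_nth cs'_def)
  then show ?thesis using free unfolding free_at_def cs'_def[symmetric] by auto
qed

definition flip_sel :: "coin \<Rightarrow> coin" where
  "flip_sel c = (case c of (s, a, b) \<Rightarrow> (s, \<not> a, b))"

lemma flip_sel_flip_sel: "flip_sel (flip_sel c) = c"
  by (cases c) (simp add: flip_sel_def)

lemma mark_bias_pair_nonneg:
  assumes valid: "valid_proposals Q" and j: "j \<le> length Q" and cs: "cs \<in> coin_lists (length Q)"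
    and r: "r < j - 1" and window: "j < r + 1 + d"
    and x_later: "\<And>u. r < u \<Longrightarrow> u < j-1 \<Longrightarrow> x \<notin> Q!u"
  shows "0 \<le> of_bool (free_at d (selections d Q cs) i j) * sel_bias i x (mark (Q!r) (cs!r) x)
     + of_bool (free_at d (selections d Q (cs[r := flip_sel (cs!r)])) i j) * sel_bias i x (mark (Q!r) (flip_sel (cs!r)) x)"
proof -
  have len: "length cs = length Q" using cs by (simp add: coin_lists_def)
  obtain s a b where cr: "cs!r = (s, a, b)" by (cases "cs!r")
  define cs' where "cs' = cs[r := (s, \<not> a, b)]"
  have cs'_r: "cs'!r = (s, \<not> a, b)" using r j len by (simp add: cs'_def)
  have flip: "cs[r := flip_sel (cs!r)] = cs'" "flip_sel (cs!r) = (s, \<not> a, b)"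
    by (simp_all add: cs'_def cr flip_sel_def)
  show ?thesis
  proof (cases "card (Q!r) = 2 \<and> s \<and> pick (Q!r) b = x")
    case False
    then have "mark (Q!r) (cs!r) x = Unk" "mark (Q!r) (s, \<not> a, b) x = Unk"
      using cr by (auto simp: mark_def)
    then show ?thesis unfolding flip by (simp add: sel_bias_def)
  next
    case True
    then have c2: "card (Q!r) = 2" and s: "s" and x: "x = pick (Q!r) b" by auto
    have sel: "sel_at d Q cs r = pick (Q!r) a" using c2 s cr by (simp add: sel_at_def sel_step_def)
    have sel': "sel_at d Q cs' r = pick (Q!r) (\<not> a)" using c2 s cs'_r by (simp add: sel_at_def sel_step_def)
    have cs'_back: "cs'[r := (True, a, b)] = cs" using cr s by (simp add: cs'_def) (metis list_update_id)
    have to_cs': "free_at d (selections d Q cs') i j"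
      if "pick (Q!r) (\<not> a) \<noteq> i" "free_at d (selections d Q cs) i j"
      using free_at_update_sender_sel[OF valid j len r window c2 _ x x_later, of a "\<not> a" i] that cr s sel'
      by (simp add: cs'_def)
    have to_cs: "free_at d (selections d Q cs) i j"
      if "pick (Q!r) a \<noteq> i" "free_at d (selections d Q cs') i j"
      using free_at_update_sender_sel[OF valid j _ r window c2 _ x x_later, of cs' "\<not> a" a i] that sel len cs'_back cs'_r s
      by (simp add: cs'_def)
    have bias: "sel_bias i x (mark (Q!r) (s, a', b) x) = (if (a' = b) = (x = i) then -1 else 1)" for a'
      using s c2 x by (cases "a' = b") (simp_all add: mark_def sel_bias_def)
    show ?thesis
    proof (cases "(a = b) = (x = i)")
      case True
      then have other: "((\<not> a) = b) \<noteq> (x = i)" by auto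
      have "pick (Q!r) (\<not> a) \<noteq> i" using True x pick_eq_iff[OF c2, of "\<not> a" b] by auto
      then have "of_bool (free_at d (selections d Q cs) i j) \<le> (of_bool (free_at d (selections d Q cs') i j) :: real)"
        using to_cs' by simp
      then show ?thesis unfolding flip(1) unfolding flip(2) unfolding cr bias using True other by simp
    next
      case False
      then have other: "((\<not> a) = b) = (x = i)" by auto
      have "pick (Q!r) a \<noteq> i" using False x pick_eq_iff[OF c2, of a b] by auto
      then have "of_bool (free_at d (selections d Q cs') i j) \<le> (of_bool (free_at d (selections d Q cs) i j) :: real)"
        using to_cs by simp
      then show ?thesis unfolding flip(1) unfolding flip(2) unfolding cr bias using False other by simp
    qed
  qed
qed

lemma mark_bias_nonneg:
  assumes valid: "valid_proposals Q" and j: "1 \<le> j" "j \<le> length Q"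
  shows "0 \<le> mark_bias d Q i x j"
proof (cases rule: tau_after_cases[OF valid j(2), of d x])
  case 1
  then show ?thesis by (simp add: mark_bias_def sel_bias_def)
next
  case (2 r)
  let ?n = "length Q"
  define F where "F cs = of_bool (free_at d (selections d Q cs) i j) * sel_bias i x (mark (Q!r) (cs!r) x)" for cs
  have "mark_bias d Q i x j = (\<Sum>cs\<in>coin_lists ?n. F cs)"
    unfolding mark_bias_def F_def using tau_after_eq_mark[OF valid _ _ 2(2,4)] 2 j by (intro sum.cong) auto
  also have "\<dots> = (\<Sum>cs\<in>coin_lists ?n. F cs + F (cs[r := flip_sel (cs!r)])) / 2"
    using sum_coin_lists_involution[OF flip_sel_flip_sel, of r ?n F] 2 j by (simp add: sum.distrib)
  also have "0 \<le> \<dots>"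
    using mark_bias_pair_nonneg[OF valid j(2) _ 2(1,3,4)] 2 j
    by (intro divide_nonneg_pos sum_nonneg) (auto simp: F_def coin_lists_def)
  finally show ?thesis .
qed

lemma free_at_iff_last_proposal:
  assumes valid: "valid_proposals Q" and j: "1 \<le> j" "j \<le> length Q" and r: "r < j - 1"
    and window: "j < r + 1 + d" and i_later: "\<And>u. r < u \<Longrightarrow> u < j-1 \<Longrightarrow> i \<notin> Q!u"
  shows "free_at d (selections d Q cs) i j \<longleftrightarrow>
    (\<forall>t. 1 \<le> t \<and> t < Suc r \<and> j < t + d \<longrightarrow> \<not> matched d (selections d Q cs) i t) \<and>
    \<not> (sel_at d Q cs r = i \<and> free_at d (selections d Q cs) i (Suc r))"
proof -
  have late: "\<not> matched d (selections d Q cs) i t" if "Suc r < t" "t < j" for t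
  proof
    assume "matched d (selections d Q cs) i t"
    then have "sel_at d Q cs (t-1) = i" using matched_selections_iff[of t Q d cs i] that j by simp
    moreover have "sel_at d Q cs (t-1) \<in> Q!(t-1)" using sel_at_in[OF valid] that j by simp
    moreover have "i \<notin> Q!(t-1)" using i_later that by simp
    ultimately show False by simp
  qed
  have at_r: "matched d (selections d Q cs) i (Suc r) \<longleftrightarrow>
      sel_at d Q cs r = i \<and> free_at d (selections d Q cs) i (Suc r)"
    using matched_selections_iff[of "Suc r" Q d cs i] r j by simp
  show ?thesis
  proof
    assume "free_at d (selections d Q cs) i j"
    then show "(\<forall>t. 1 \<le> t \<and> t < Suc r \<and> j < t + d \<longrightarrow> \<not> matched d (selections d Q cs) i t) \<and>
        \<not> (sel_at d Q cs r = i \<and> free_at d (selections d Q cs) i (Suc r))"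
      using r window at_r unfolding free_at_def by auto
  next
    assume before: "(\<forall>t. 1 \<le> t \<and> t < Suc r \<and> j < t + d \<longrightarrow> \<not> matched d (selections d Q cs) i t) \<and>
        \<not> (sel_at d Q cs r = i \<and> free_at d (selections d Q cs) i (Suc r))"
    show "free_at d (selections d Q cs) i j"
      unfolding free_at_def
    proof (intro allI impI)
      fix t assume t: "1 \<le> t \<and> t < j \<and> j < t + d"
      consider "t < Suc r" | "t = Suc r" | "Suc r < t" by arith
      then show "\<not> matched d (selections d Q cs) i t"
        using before at_r late t by cases auto
    qed
  qed
qed

lemma mark_bias_last_proposal:
  assumes valid: "valid_proposals Q" and j: "1 \<le> j" "j \<le> length Q" and r: "r < j - 1"
    and i: "i \<in> Q!r" and c2: "card (Q!r) = 2" and window: "j < r + 1 + d"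
    and i_later: "\<And>u. r < u \<Longrightarrow> u < j-1 \<Longrightarrow> i \<notin> Q!u"
  shows "mark_bias d Q i i j = count_free d Q i (Suc r) / 8"
proof -
  let ?n = "length Q"
  define before where "before cs = (\<forall>t. 1 \<le> t \<and> t < Suc r \<and> j < t + d \<longrightarrow> \<not> matched d (selections d Q cs) i t)"
    for cs
  define H where "H cs c = of_bool (before cs \<and>
      \<not> (sel_step d (Q!r) (Suc r) (tau_after d Q cs r) c = i \<and> free_at d (selections d Q cs) i (Suc r)))
      * sel_bias i i (mark (Q!r) c i)" for cs c
  have tau: "tau_after d Q cs (j-1) i j = mark (Q!r) (cs!r) i" for cs
    by (rule tau_after_eq_mark) (use valid j r i i_later window in auto)
  have "mark_bias d Q i i j = (\<Sum>cs\<in>coin_lists ?n. H cs (cs!r))"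
    unfolding mark_bias_def H_def before_def
    by (intro sum.cong refl) (simp only: tau free_at_iff_last_proposal[OF valid j r window i_later] sel_at_def)
  also have "\<dots> = (\<Sum>cs\<in>coin_lists ?n. \<Sum>c\<in>UNIV. H cs c) / 8"
  proof (rule sum_coin_lists_resample)
    fix cs x c
    have "before (cs[r := x]) = before cs"
      unfolding before_def using matched_update[of r Q _ d cs x i] r j by auto
    then show "H (cs[r := x]) c = H cs c"
      unfolding H_def using free_at_update[of r Q "Suc r" d cs x i] tau_after_update[of r r d Q cs x] r j by simp
  qed (use r j in simp)
  also have "\<dots> = count_free d Q i (Suc r) / 8"
  proof -
    obtain b where b: "i = pick (Q!r) b" using ex_pick[OF c2 i] by blast
    have "free_at d (selections d Q cs) i (Suc r) \<Longrightarrow> before cs" for cs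
      unfolding free_at_def before_def using r by auto
    then have "(\<Sum>c\<in>UNIV. H cs c) = of_bool (free_at d (selections d Q cs) i (Suc r))" for cs
      unfolding H_def sum_coin_mark_bias[OF c2 b] by auto
    then show ?thesis unfolding count_free_def by simp
  qed
  finally show ?thesis .
qed

section \<open>The bounds on \<open>\<Delta>\<mu>\<close>\<close>

lemma count_matched_ge_half:
  assumes valid: "valid_proposals Q" and j: "1 \<le> j" "j \<le> length Q" and i: "i \<in> Q!(j-1)"
  shows "count_free d Q i j / 2 \<le> count_matched d Q i j"
proof (cases "card (Q!(j-1)) = 1")
  case True
  then show ?thesis using count_matched_deterministic_round[OF j True i] count_free_nonneg[of d Q i j] by simp
next
  case False
  then have c2: "card (Q!(j-1)) = 2" using valid_proposals_nth[OF valid, of "j-1"] j by simp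
  obtain k where "k \<in> Q!(j-1)" "k \<noteq> i" using ex_other_el[OF c2 i] by blast
  then show ?thesis
    using count_matched_randomized_round[OF j c2 i] mark_bias_nonneg[OF valid j, of d i] by fastforce
qed

lemma dmu_deterministic_round:
  assumes "d \<ge> 1" "1 \<le> j" "j \<le> length Q" "card (Q!(j-1)) = 1" "i \<in> Q!(j-1)"
  shows "dmu d Q i j = avail d Q i j"
  using count_matched_deterministic_round[OF assms(2-5)] by (simp add: dmu_eq_count avail_eq_count[OF assms(1)])

lemma dmu_ge_half_avail:
  assumes "d \<ge> 1" "valid_proposals Q" "1 \<le> j" "j \<le> length Q" "i \<in> Q!(j-1)"
  shows "avail d Q i j / 2 \<le> dmu d Q i j"
proof -
  have "count_free d Q i j / 2 / 8 ^ length Q \<le> count_matched d Q i j / 8 ^ length Q"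
    by (intro divide_right_mono count_matched_ge_half[OF assms(2-5)]) simp
  then show ?thesis by (simp add: dmu_eq_count avail_eq_count[OF assms(1)] ac_simps)
qed

lemma count_matched_ge_prev:
  assumes valid: "valid_proposals Q" and j: "1 \<le> j" "j \<le> length Q" and c2: "card (Q!(j-1)) = 2"
    and i: "i \<in> Q!(j-1)" and prev: "prev Q i j = Some j'" and window: "j < j' + d"
  shows "count_free d Q i j / 2 + (count_free d Q i j' - count_matched d Q i j') / 32 \<le> count_matched d Q i j"
proof -
  note j' = prev_SomeD[OF prev]
  then have j'_bounds: "1 \<le> j'" "j' \<le> length Q" using j by auto
  obtain r where r: "j' = Suc r" using j'(1) by (cases j') auto
  have i_later: "\<And>u. r < u \<Longrightarrow> u < j-1 \<Longrightarrow> i \<notin> Q!u" using j'(4)[of "Suc _"] r by simp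
  consider "card (Q!(j'-1)) = 1" | "card (Q!(j'-1)) = 2"
    using valid_proposals_nth[OF valid, of "j'-1"] j'_bounds by fastforce
  then show ?thesis
  proof cases
    case 1
    then show ?thesis
      using count_matched_deterministic_round[OF j'_bounds 1 j'(3)] count_matched_ge_half[OF valid j i] by simp
  next
    case 2
    obtain k where k: "k \<in> Q!(j-1)" "k \<noteq> i" using ex_other_el[OF c2 i] by blast
    have "mark_bias d Q i i j = count_free d Q i j' / 8"
      using mark_bias_last_proposal[OF valid j _ _ _ _ i_later] j' window 2 r by simp
    then have "count_free d Q i j / 2 + count_free d Q i j' / 64 \<le> count_matched d Q i j"
      using count_matched_randomized_round[OF j c2 i k, where d = d] mark_bias_nonneg[OF valid j, of d i k] by argo
    then show ?thesis using count_matched_ge_half[OF valid j'_bounds j'(3), where d = d] by argo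
  qed
qed

lemma dmu_ge_prev:
  assumes "d \<ge> 1" "valid_proposals Q" "1 \<le> j" "j \<le> length Q" "card (Q!(j-1)) = 2"
    "i \<in> Q!(j-1)" "prev Q i j = Some j'" "j < j' + d"
  shows "avail d Q i j / 2 + (1/32) * (avail d Q i j' - dmu d Q i j') \<le> dmu d Q i j"
proof -
  let ?N = "8 ^ length Q :: real"
  have "(count_free d Q i j / 2 + (count_free d Q i j' - count_matched d Q i j') / 32) / ?N
      \<le> count_matched d Q i j / ?N"
    by (intro divide_right_mono count_matched_ge_prev[OF assms(2-8)]) simp
  moreover have "(count_free d Q i j / 2 + (count_free d Q i j' - count_matched d Q i j') / 32) / ?N =
      avail d Q i j / 2 + (1/32) * (avail d Q i j' - dmu d Q i j')"
    by (simp add: dmu_eq_count avail_eq_count[OF assms(1)] field_simps)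
  ultimately show ?thesis by (simp add: dmu_eq_count)
qed

theorem mainTheorem2:
  fixes V :: "'v set" and Q :: "'v set list" and d :: nat
  assumes "finite V" and "d \<ge> 1"
    and "\<forall>q\<in>set Q. q \<subseteq> V \<and> (card q = 1 \<or> card q = 2)"
  shows "\<forall>j i. 1 \<le> j \<and> j \<le> length Q \<and> i \<in> V \<longrightarrow>
     (i \<notin> Q ! (j - 1) \<longrightarrow> dmu d Q i j \<ge> 0) \<and>
     (i \<in> Q ! (j - 1) \<and> card (Q ! (j - 1)) = 1 \<longrightarrow> dmu d Q i j \<ge> avail d Q i j) \<and>
     (i \<in> Q ! (j - 1) \<and> card (Q ! (j - 1)) = 2 \<and>
        (prev Q i j = None \<or> (\<exists>j'. prev Q i j = Some j' \<and> j' + d \<le> j))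
        \<longrightarrow> dmu d Q i j \<ge> avail d Q i j / 2) \<and>
     (\<forall>j'. i \<in> Q ! (j - 1) \<and> card (Q ! (j - 1)) = 2 \<and> prev Q i j = Some j' \<and> j < j' + d
        \<longrightarrow> dmu d Q i j \<ge> avail d Q i j / 2 + (1/32) * (avail d Q i j' - dmu d Q i j'))"
proof (intro allI impI conjI)
  fix j i
  assume "1 \<le> j \<and> j \<le> length Q \<and> i \<in> V"
  then have j: "1 \<le> j" "j \<le> length Q" by auto
  have valid: "valid_proposals Q" using assms(3) by (auto simp: valid_proposals_def)
  show "dmu d Q i j \<ge> 0" by (simp add: dmu_def)
  show "dmu d Q i j \<ge> avail d Q i j" if "i \<in> Q ! (j - 1) \<and> card (Q ! (j - 1)) = 1"
    using dmu_deterministic_round[OF assms(2) j] that by simp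
  show "dmu d Q i j \<ge> avail d Q i j / 2" if "i \<in> Q ! (j - 1) \<and> card (Q ! (j - 1)) = 2 \<and>
        (prev Q i j = None \<or> (\<exists>j'. prev Q i j = Some j' \<and> j' + d \<le> j))"
    using dmu_ge_half_avail[OF assms(2) valid j] that by simp
  show "dmu d Q i j \<ge> avail d Q i j / 2 + (1/32) * (avail d Q i j' - dmu d Q i j')"
    if "i \<in> Q ! (j - 1) \<and> card (Q ! (j - 1)) = 2 \<and> prev Q i j = Some j' \<and> j < j' + d" for j'
    using dmu_ge_prev[OF assms(2) valid j] that by simp
qed

end
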